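(* Let $\psi_n(x)=e^{-n^{1/2}x^2/2}\big(\cosh(xn^{-1/4})\big)^n$ and $I_\infty=\int_{\mathbb{R}}e^{-x^4/12}dx$. For every $b\ge0$ and every $\eta>0$ there is $n_0$ such that for all $n\ge n_0$ and all $\xi\in\mathbb{R}$, $$|\widehat{\psi_n}(\xi)|\le(1+\eta)\,K(b)\,e^{-b|\xi|},\qquad K(b)=2e^{13b^4/12}\big(2\sqrt3\,b+I_\infty\big),$$ where $\widehat{\psi_n}(\xi)=\int_{\mathbb{R}}\psi_n(x)e^{i\xi x}dx$. *)

theory Defs
  imports "HOL-Analysis.Analysis"
begin

definition psi :: "nat \<Rightarrow> real \<Rightarrow> real" where
  "psi n x = exp (- (sqrt (real n)) * x\<^sup>2 / 2) * (cosh (x * real n powr (-1/4))) ^ n"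

definition I_inf :: real where
  "I_inf = integral UNIV (\<lambda>x::real. exp (- (x ^ 4) / 12))"

definition psi_hat :: "nat \<Rightarrow> real \<Rightarrow> complex" where
  "psi_hat n \<xi> = integral UNIV (\<lambda>x::real. complex_of_real (psi n x) * cis (\<xi> * x))"

definition K :: "real \<Rightarrow> real" where
  "K b = 2 * exp (13 * b ^ 4 / 12) * (2 * sqrt 3 * b + I_inf)"

end

theory Submission
  imports Defs "HOL-Probability.Characteristic_Functions" "HOL-Real_Asymp.Real_Asymp"
begin

text \<open>
  The function \<open>psi n\<close> is the restriction to the real line of the entire function
  \<open>psi_ext n z = exp (-\<surd>n z\<^sup>2/2) cosh (t z)^n\<close> with \<open>t = n powr (-1/4)\<close>. Expanding
  \<open>cosh\<^sup>n\<close> binomially writes \<open>psi_ext n z * exp (i \<xi> z)\<close> as a finite combination of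
  Gaussians \<open>exp (-a z\<^sup>2/2 + w z)\<close>, whose integrals along any horizontal line are all given by
  the same closed formula. Hence the Fourier transform of \<open>psi n\<close> may be computed on the line
  \<open>Im z = b sgn \<xi>\<close>, which produces the factor \<open>exp (-b |\<xi>|)\<close>. On that line the identity
  \<open>|cosh q|\<^sup>2 = cosh\<^sup>2 (Re q) - sin\<^sup>2 (Im q)\<close> and elementary Taylor bounds give
  \<open>|psi_ext n (x + i\<beta>)| \<le> exp (7b\<^sup>4/40) exp (b\<^sup>2x\<^sup>2/2) psi n x\<close> once \<open>b t \<le> 1\<close>.
  Finally \<open>psi n x \<longrightarrow> exp (-x\<^sup>4/12)\<close> under a Gaussian majorant, so by dominated convergence
  \<open>\<integral> exp (b\<^sup>2x\<^sup>2/2) psi n x dx\<close> tends to \<open>\<integral> exp (b\<^sup>2x\<^sup>2/2 - x\<^sup>4/12) dx\<close>, which is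
  at most \<open>exp (-7b\<^sup>4/40) K b\<close>.
\<close>

lemma six_power_mult_fact_le: "k \<ge> 1 \<Longrightarrow> 6^k * fact k \<le> (3::real) * fact (2*k)"
proof (induction k rule: nat_induct_at_least)
  case base
  then show ?case by (simp add: numeral_2_eq_2)
next
  case (Suc k)
  have "(6::real)^(Suc k) * fact (Suc k) = (6 * real (Suc k)) * ((6::real)^k * fact k)"
    by (simp add: algebra_simps)
  also have "\<dots> \<le> (6 * real (Suc k)) * (3 * (fact (2*k)::real))"
    using Suc by (intro mult_left_mono) auto
  also have "\<dots> \<le> (real (2*k+2) * real (2*k+1)) * (3 * (fact (2*k)::real))"
  proof (intro mult_right_mono)
    have "real k * real k \<ge> 1 * 1" using Suc by (intro mult_mono) auto
    thus "6 * real (Suc k) \<le> real (2*k+2) * real (2*k+1)" by (simp add: algebra_simps)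
  qed simp
  also have "\<dots> = 3 * fact (2 * Suc k)"
  proof -
    have "fact (2 * Suc k) = (real (2*k+2) * real (2*k+1)) * (fact (2*k) :: real)"
      by (simp only: mult_Suc_right add_2_eq_Suc fact_Suc) (simp add: algebra_simps)
    thus ?thesis by simp
  qed
  finally show ?case .
qed

text \<open>Compare the Taylor series termwise: \<open>u^(2k)/(2k)! \<le> 3 (u\<^sup>2/6)^k/k!\<close>, the
  surplus \<open>2\<close> being absorbed by the constant terms.\<close>
lemma cosh_le_three_exp_minus_two: "cosh (u::real) \<le> 3 * exp (u^2/6) - 2"
proof -
  have "(\<lambda>k. (\<lambda>n. if even n then u ^ n /\<^sub>R fact n else 0) (2 * k)) sums cosh u"
    by (subst sums_mono_reindex) (auto simp: strict_mono_def cosh_converges elim!: evenE)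
  hence cosh_sums: "(\<lambda>k. u^(2*k) / fact (2*k)) sums cosh u"
    by (simp add: divide_inverse mult.commute)
  have lhs: "(\<lambda>k. u^(2*k) / fact (2*k) + (if k = 0 then 2 else 0)) sums (cosh u + 2)"
    using sums_add[OF cosh_sums sums_single[of 0 "\<lambda>_. 2::real"]] by simp
  have exp_sums: "(\<lambda>k. v ^ k / fact k) sums exp v" for v :: real
    using exp_converges[of v] by (simp add: divide_inverse_commute)
  have rhs: "(\<lambda>k. 3 * ((u^2/6) ^ k / fact k)) sums (3 * exp (u^2/6))"
    by (rule sums_mult[OF exp_sums])
  have termwise: "u^(2*k) / fact (2*k) + (if k = 0 then 2 else 0) \<le> 3 * ((u^2/6) ^ k / fact k)"
    for k
  proof (cases "k = 0")
    case False
    hence fact_le: "6^k * fact k \<le> (3::real) * fact (2*k)" by (intro six_power_mult_fact_le) auto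
    have u_pow: "(u^2/6)^k = u^(2*k) / 6^k" by (simp add: power_mult power_divide)
    have "u^(2*k) \<ge> 0" by (simp add: power_mult)
    have "u^(2*k) / fact (2*k) = (3 * u^(2*k)) / (3 * fact (2*k))" by simp
    also have "\<dots> \<le> (3 * u^(2*k)) / (6^k * fact k)"
      using fact_le \<open>u^(2*k) \<ge> 0\<close> by (intro divide_left_mono) auto
    also have "\<dots> = 3 * (u^(2*k) / 6^k / fact k)" by simp
    finally show ?thesis using False u_pow by simp
  qed simp
  have "cosh u + 2 \<le> 3 * exp (u^2/6)" by (rule sums_le[OF _ lhs rhs]) (use termwise in blast)
  thus ?thesis by simp
qed

lemma cosh_le_exp_square_half: "cosh (u::real) \<le> exp (u^2/2)"
proof -
  define y where "y = exp (u^2/6)"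
  have "cosh u \<le> 3 * y - 2" unfolding y_def by (rule cosh_le_three_exp_minus_two)
  also have "3 * y - 2 \<le> y^3"
  proof -
    have "y^3 - 3*y + 2 = (y - 1)^2 * (y + 2)"
      by (simp add: algebra_simps power2_eq_square power3_eq_cube)
    also have "\<dots> \<ge> 0" by (simp add: y_def add_nonneg_pos)
    finally show ?thesis by simp
  qed
  also have "y^3 = exp (u^2/2)" unfolding y_def by (simp add: exp_of_nat_mult[symmetric])
  finally show ?thesis .
qed

lemma cosh_le_exp_abs: "cosh (u::real) \<le> exp \<bar>u\<bar>"
proof -
  have "exp u + exp (-u) \<le> exp \<bar>u\<bar> + exp \<bar>u\<bar>" by (intro add_mono) auto
  thus ?thesis by (simp add: cosh_def)
qed

lemma three_exp_minus_two_mult_exp_le: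
  fixes s :: real assumes "s \<ge> 0"
  shows "(3 * exp s - 2) * exp (- 3 * s) \<le> exp (- ((s/(1+s))^2))"
proof -
  define y where "y = exp (-s)"
  have y0: "y > 0" by (simp add: y_def)
  have "(3 * exp s - 2) * exp (- 3 * s) = 1 - (1-y)^2 * (1 + 2*y)"
  proof -
    have "exp s = 1/y" by (simp add: y_def exp_minus field_simps)
    moreover have "exp (- 3 * s) = y^3" by (simp add: y_def exp_of_nat_mult[symmetric])
    ultimately show ?thesis using y0 by (simp add: field_simps power2_eq_square power3_eq_cube)
  qed
  also have "\<dots> \<le> 1 - (1-y)^2"
    using mult_left_mono[of 1 "1 + 2*y" "(1-y)^2"] y0 by simp
  also have "\<dots> \<le> exp (-((1-y)^2))" using exp_ge_add_one_self[of "-((1-y)^2)"] by simp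
  also have "\<dots> \<le> exp (- ((s/(1+s))^2))"
  proof -
    have "y \<le> 1/(1+s)"
      using exp_ge_add_one_self[of s] assms by (simp add: y_def exp_minus field_simps)
    hence "s/(1+s) \<le> 1 - y" using assms by (simp add: field_simps)
    hence "(s/(1+s))^2 \<le> (1-y)^2" using assms by (intro power_mono) auto
    thus ?thesis by simp
  qed
  finally show ?thesis .
qed

lemma sin_ge_cubic: fixes v :: real assumes "0 \<le> v" "v \<le> 1" shows "v - 7/40 * v^3 \<le> sin v"
proof -
  have "(\<Sum>m<5. sin_coeff m * v ^ m) = v - v^3/6"
  proof -
    have "sin_coeff 1 = 1" "sin_coeff 2 = 0" "sin_coeff 3 = -1/6" "sin_coeff 4 = 0"
      by (simp_all add: sin_coeff_def fact_numeral)
    moreover have "{..<5::nat} = {0,1,2,3,4}" by auto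
    ultimately show ?thesis by simp
  qed
  moreover have "(fact 5::real) = 120" by (simp add: fact_numeral)
  ultimately have "\<bar>sin v - (v - v^3/6)\<bar> \<le> v^5/120"
    using Maclaurin_sin_bound[of v 5] assms by simp
  moreover have "v^5 \<le> v^3" using assms by (intro power_decreasing) auto
  ultimately show ?thesis by linarith
qed

lemma sin_square_ge: fixes v :: real assumes "\<bar>v\<bar> \<le> 1" shows "v^2 - 7/20 * v^4 \<le> (sin v)^2"
proof -
  have *: "w^2 - 7/20 * w^4 \<le> (sin w)^2" if "0 \<le> w" "w \<le> 1" for w :: real
  proof -
    have "w^2 \<le> 1" using that by (simp add: power_le_one)
    hence "7/40 * w^3 \<le> w" using that mult_left_mono[of "w^2" 1 w]
      by (simp add: power3_eq_cube power2_eq_square)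
    hence "(w - 7/40 * w^3)^2 \<le> (sin w)^2" using sin_ge_cubic[OF that] by (intro power_mono) auto
    moreover have "(w - 7/40 * w^3)^2 = w^2 - 7/20 * w^4 + (7/40)^2 * w^6"
      by (simp add: algebra_simps power2_eq_square) (simp add: power_def eval_nat_numeral)
    moreover have "0 \<le> (7/40)^2 * w^6" using that by simp
    ultimately show ?thesis by linarith
  qed
  show ?thesis
  proof (cases "v \<ge> 0")
    case True
    thus ?thesis using *[of v] assms by simp
  next
    case False
    thus ?thesis using *[of "-v"] assms by simp
  qed
qed

lemma cosh_square_mult_le_one: "(cosh u)^2 * (1 - u^2) \<le> (1::real)"
proof (cases "u^2 \<le> 1")
  case True
  have "(cosh u)^2 \<le> exp (u^2/2) ^ 2" by (intro power_mono cosh_le_exp_square_half) auto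
  also have "\<dots> = exp (u^2)" by (simp flip: exp_of_nat_mult)
  finally have "(cosh u)^2 * (1 - u^2) \<le> exp (u^2) * exp (-(u^2))"
    using True exp_ge_add_one_self[of "-(u^2)"] by (intro mult_mono) auto
  thus ?thesis by (simp add: exp_minus)
next
  case False
  hence "(cosh u)^2 * (1 - u^2) \<le> 0" by (intro mult_nonneg_nonpos) auto
  thus ?thesis by simp
qed

lemma cosh_square_minus_sin_square_le:
  fixes u v :: real assumes "\<bar>v\<bar> \<le> 1"
  shows "(cosh u)^2 - (sin v)^2 \<le> (cosh u)^2 * exp (-(v^2) + 7/20 * v^4 + v^2 * u^2)"
proof -
  have cpos: "cosh u > 0" by simp
  have "(sin v)^2 * (1 - u^2) * (cosh u)^2 \<le> (sin v)^2"
    using mult_left_mono[OF cosh_square_mult_le_one[of u], of "(sin v)^2"] by (simp add: algebra_simps)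
  hence "(sin v)^2 / (cosh u)^2 \<ge> (sin v)^2 * (1 - u^2)"
    using cpos by (simp add: field_simps)
  moreover have "(sin v)^2 * u^2 \<le> v^2 * u^2"
    using abs_sin_x_le_abs_x[of v] by (intro mult_right_mono) (auto simp: abs_le_square_iff)
  ultimately have sin_ratio: "(sin v)^2 / (cosh u)^2 \<ge> v^2 - 7/20 * v^4 - v^2 * u^2"
    using sin_square_ge[OF assms] by (simp add: algebra_simps)
  have "(cosh u)^2 - (sin v)^2 = (cosh u)^2 * (1 - (sin v)^2 / (cosh u)^2)"
    using cpos by (simp add: field_simps)
  also have "\<dots> \<le> (cosh u)^2 * exp (- ((sin v)^2 / (cosh u)^2))"
    using exp_ge_add_one_self[of "- ((sin v)^2 / (cosh u)^2)"] by (intro mult_left_mono) auto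
  also have "\<dots> \<le> (cosh u)^2 * exp (-(v^2) + 7/20 * v^4 + v^2 * u^2)"
    using sin_ratio by (intro mult_left_mono) auto
  finally show ?thesis .
qed

lemma norm_cosh_squared: "(norm (cosh q))^2 = cosh (Re q)^2 - sin (Im q)^2"
  for q :: complex
proof -
  have "Re (cosh q) = cosh (Re q) * cos (Im q)" "Im (cosh q) = sinh (Re q) * sin (Im q)"
    by (simp_all add: cosh_field_def cosh_def sinh_def Re_exp Im_exp field_simps)
  hence "(norm (cosh q))^2 = cosh (Re q)^2 * cos (Im q)^2 + sinh (Re q)^2 * sin (Im q)^2"
    by (simp add: cmod_power2 power_mult_distrib)
  also have "\<dots> = cosh (Re q)^2 - sin (Im q)^2"
    by (simp add: cos_squared_eq sinh_square_eq algebra_simps)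
  finally show ?thesis .
qed

section \<open>Gaussian integrals with a complex linear term\<close>

lemma has_bochner_integral_lborel_imp_has_integral:
  fixes f :: "'a::euclidean_space \<Rightarrow> 'b::euclidean_space"
  assumes "has_bochner_integral lborel f I"
  shows "(f has_integral I) UNIV"
  using has_integral_integral_lborel[of f] assms by (simp add: has_bochner_integral_iff)

lemma gaussian_exp_linear_translate:
  fixes a w \<zeta> z :: complex
  shows "exp (-(a * (z + \<zeta>)^2 / 2) + w * (z + \<zeta>))
           = exp (-(a * \<zeta>^2 / 2) + w * \<zeta>) * exp (-(a * z^2 / 2) + (w - a * \<zeta>) * z)"
  unfolding mult_exp_exp by (rule arg_cong[where f = exp]) (simp add: power2_eq_square algebra_simps)

lemma gaussian_exp_linear_translate_value:
  fixes a w \<zeta> :: complex assumes "a \<noteq> 0"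
  shows "exp (-(a * \<zeta>^2 / 2) + w * \<zeta>) * exp ((w - a * \<zeta>)^2 / (2 * a)) = exp (w^2 / (2 * a))"
  unfolding mult_exp_exp using assms
  by (intro arg_cong[where f = exp]) (simp add: power2_eq_square field_simps)

lemma has_bochner_integral_std_normal_iexp:
  "has_bochner_integral lborel (\<lambda>x. std_normal_density x *\<^sub>R iexp (\<tau> * x)) (complex_of_real (exp (- (\<tau>^2) / 2)))"
proof -
  interpret real_distribution std_normal_distribution by (rule real_dist_normal_dist)
  have i1: "integrable std_normal_distribution (\<lambda>x. iexp (\<tau> * x))"
    by (rule integrable_iexp) auto
  have i2: "integrable lborel (\<lambda>x. std_normal_density x *\<^sub>R iexp (\<tau> * x))"
    using i1 by (subst (asm) integrable_density) auto
  have "char std_normal_distribution \<tau> = (CLINT x|lborel. std_normal_density x *\<^sub>R iexp (\<tau> * x))"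
    unfolding char_def by (subst integral_density) auto
  hence "(CLINT x|lborel. std_normal_density x *\<^sub>R iexp (\<tau> * x)) = complex_of_real (exp (- (\<tau>^2) / 2))"
    by (simp add: char_std_normal_distribution)
  with i2 show ?thesis by (simp add: has_bochner_integral_iff)
qed

lemma has_bochner_integral_gaussian_exp_linear:
  fixes a :: real and w :: complex
  assumes a: "a > 0"
  shows "has_bochner_integral lborel (\<lambda>x::real. exp (-(of_real a * (of_real x)^2 / 2) + w * of_real x))
           (of_real (sqrt (2*pi/a)) * exp (w^2 / (2 * of_real a)))"
proof -
  define c where "c = Re w"
  define \<xi> where "\<xi> = Im w"
  define s where "s = sqrt a"
  have s0: "s > 0" using a by (simp add: s_def)
  have ss: "s^2 = a" using a by (simp add: s_def)
  define \<tau> where "\<tau> = \<xi> / s"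
  define t' where "t' = - c / s"
  define g where "g = (\<lambda>x. std_normal_density x *\<^sub>R iexp (\<tau> * x))"
  text \<open>Substitute \<open>t' + s x\<close> into the characteristic function of the standard normal
    distribution; the factor \<open>M\<close> completes the square.\<close>
  define M where "M = complex_of_real (sqrt (2*pi)) * exp (complex_of_real (c^2/(2*a)) + \<i> * complex_of_real (\<xi> * c / a))"
  have "has_bochner_integral lborel g (complex_of_real (exp (- (\<tau>^2) / 2)))"
    unfolding g_def by (rule has_bochner_integral_std_normal_iexp)
  hence "has_bochner_integral lborel (\<lambda>x. g (t' + s * x)) (complex_of_real (exp (- (\<tau>^2) / 2)) /\<^sub>R \<bar>s\<bar>)"
    using s0 by (subst (asm) lborel_has_bochner_integral_real_affine_iff[where c=s and t=t']) auto
  hence hb: "has_bochner_integral lborel (\<lambda>x. M * g (t' + s * x)) (M * (complex_of_real (exp (- (\<tau>^2) / 2)) /\<^sub>R \<bar>s\<bar>))"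
    by (rule has_bochner_integral_mult_right)
  have pw: "M * g (t' + s * x) = exp (-(of_real a * (of_real x)^2 / 2) + w * of_real x)" for x
  proof -
    define y where "y = t' + s * x"
    have "M * g y = exp (complex_of_real (c^2/(2*a)) + \<i> * complex_of_real (\<xi> * c / a)) *
                     (complex_of_real (exp (- (y^2)/2)) * exp (\<i> * complex_of_real (\<tau> * y)))"
      unfolding M_def g_def std_normal_density_def by (simp add: scaleR_conv_of_real)
    also have "\<dots> = exp (complex_of_real (c^2/(2*a)) + \<i> * complex_of_real (\<xi> * c / a)
                         + complex_of_real (- (y^2)/2) + \<i> * complex_of_real (\<tau> * y))"
      by (simp only: exp_add exp_of_real mult.assoc)
    also have "complex_of_real (c^2/(2*a)) + \<i> * complex_of_real (\<xi> * c / a)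
                         + complex_of_real (- (y^2)/2) + \<i> * complex_of_real (\<tau> * y)
               = -(of_real a * (of_real x)^2 / 2) + w * of_real x"
    proof (rule complex_eqI)
      have "c^2/(2*a) + - (y^2)/2 = -(a * x^2 / 2) + c * x"
        using s0 a unfolding y_def t'_def by (simp add: field_simps power2_eq_square ss[symmetric])
      thus "Re (complex_of_real (c^2/(2*a)) + \<i> * complex_of_real (\<xi> * c / a)
                         + complex_of_real (- (y^2)/2) + \<i> * complex_of_real (\<tau> * y))
            = Re (-(of_real a * (of_real x)^2 / 2) + w * of_real x)"
        by (simp add: c_def power2_eq_square)
      have "\<xi> * c / a + \<tau> * y = \<xi> * x"
        using s0 a unfolding y_def t'_def \<tau>_def by (simp add: field_simps power2_eq_square ss[symmetric])
      thus "Im (complex_of_real (c^2/(2*a)) + \<i> * complex_of_real (\<xi> * c / a)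
                         + complex_of_real (- (y^2)/2) + \<i> * complex_of_real (\<tau> * y))
            = Im (-(of_real a * (of_real x)^2 / 2) + w * of_real x)"
        by (simp add: \<xi>_def power2_eq_square)
    qed
    finally show ?thesis by (simp add: y_def)
  qed
  have val: "M * (complex_of_real (exp (- (\<tau>^2) / 2)) /\<^sub>R \<bar>s\<bar>) = of_real (sqrt (2*pi/a)) * exp (w^2 / (2 * of_real a))"
  proof -
    have "M * (complex_of_real (exp (- (\<tau>^2) / 2)) /\<^sub>R \<bar>s\<bar>)
        = complex_of_real (sqrt (2*pi) / s) * exp (complex_of_real (c^2/(2*a)) + \<i> * complex_of_real (\<xi> * c / a) + complex_of_real (- (\<tau>^2) / 2))"
    proof -
      define A where "A = complex_of_real (c^2/(2*a)) + \<i> * complex_of_real (\<xi> * c / a)"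
      have e1: "exp A * complex_of_real (exp (- (\<tau>^2) / 2)) = exp (A + complex_of_real (- (\<tau>^2) / 2))"
        by (simp only: exp_add exp_of_real)
      have "M * (complex_of_real (exp (- (\<tau>^2) / 2)) /\<^sub>R \<bar>s\<bar>)
            = complex_of_real (sqrt (2*pi)) * complex_of_real (1/s) * (exp A * complex_of_real (exp (- (\<tau>^2) / 2)))"
        using s0 unfolding M_def A_def[symmetric] by (simp add: scaleR_conv_of_real field_simps)
      also have "\<dots> = complex_of_real (sqrt (2*pi) / s) * exp (A + complex_of_real (- (\<tau>^2) / 2))"
        unfolding e1 by (simp add: of_real_mult[symmetric] del: of_real_mult)
      finally show ?thesis by (simp add: A_def)
    qed
    also have "sqrt (2*pi) / s = sqrt (2*pi/a)" using a by (simp add: s_def real_sqrt_divide)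
    also have "complex_of_real (c^2/(2*a)) + \<i> * complex_of_real (\<xi> * c / a) + complex_of_real (- (\<tau>^2) / 2)
               = w^2 / (2 * of_real a)"
    proof (rule complex_eqI)
      have "c^2/(2*a) + - (\<tau>^2) / 2 = (c^2 - \<xi>^2) / (2*a)"
        using s0 a unfolding \<tau>_def by (simp add: field_simps power2_eq_square ss[symmetric])
      thus "Re (complex_of_real (c^2/(2*a)) + \<i> * complex_of_real (\<xi> * c / a) + complex_of_real (- (\<tau>^2) / 2))
            = Re (w^2 / (2 * of_real a))"
        using a by (simp add: c_def \<xi>_def power2_eq_square Re_divide_of_real)
      show "Im (complex_of_real (c^2/(2*a)) + \<i> * complex_of_real (\<xi> * c / a) + complex_of_real (- (\<tau>^2) / 2))
            = Im (w^2 / (2 * of_real a))"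
        using a by (simp add: c_def \<xi>_def power2_eq_square Im_divide_of_real field_simps)
    qed
    finally show ?thesis .
  qed
  from hb show ?thesis unfolding pw val .
qed

lemma has_integral_gaussian_exp_linear_line:
  fixes a \<beta> :: real and w :: complex assumes a: "a > 0"
  shows "((\<lambda>x::real. exp (-(of_real a * (of_real x + \<i> * of_real \<beta>)^2 / 2) + w * (of_real x + \<i> * of_real \<beta>)))
           has_integral (of_real (sqrt (2*pi/a)) * exp (w^2 / (2 * of_real a)))) UNIV"
proof -
  define \<zeta> where "\<zeta> = \<i> * complex_of_real \<beta>"
  define M where "M = exp (-(of_real a * \<zeta>^2 / 2) + w * \<zeta>)"
  have "has_bochner_integral lborel
          (\<lambda>x. M * exp (-(of_real a * (of_real x)^2 / 2) + (w - of_real a * \<zeta>) * of_real x))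
          (M * (of_real (sqrt (2*pi/a)) * exp ((w - of_real a * \<zeta>)^2 / (2 * of_real a))))"
    by (intro has_bochner_integral_mult_right has_bochner_integral_gaussian_exp_linear a)
  hence "has_bochner_integral lborel
          (\<lambda>x. exp (-(of_real a * (of_real x + \<zeta>)^2 / 2) + w * (of_real x + \<zeta>)))
          (of_real (sqrt (2*pi/a)) * exp (w^2 / (2 * of_real a)))"
    using gaussian_exp_linear_translate_value[of "of_real a" \<zeta> w] a
    unfolding M_def gaussian_exp_linear_translate[symmetric] by (simp add: mult_ac)
  thus ?thesis unfolding \<zeta>_def by (rule has_bochner_integral_lborel_imp_has_integral)
qed

lemma integrable_exp_neg_square_half: "integrable lborel (\<lambda>x::real. exp (-(x^2)/2))"
proof -
  have "integrable lborel (\<lambda>x. sqrt (2*pi) * std_normal_density x)"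
    by (intro integrable_mult_right) simp
  moreover have "(\<lambda>x. sqrt (2*pi) * std_normal_density x) = (\<lambda>x::real. exp (-(x^2)/2))"
    by (simp add: std_normal_density_def fun_eq_iff)
  ultimately show ?thesis by simp
qed

lemma integrable_exp_neg_quartic: "integrable lborel (\<lambda>x::real. exp (-(x^4)/12))"
proof (rule Bochner_Integration.integrable_bound)
  show "integrable lborel (\<lambda>x::real. exp (3/4) * exp (-(x^2)/2))"
    by (intro integrable_mult_right integrable_exp_neg_square_half)
  have "exp (-(x^4)/12) \<le> exp (3/4) * exp (-(x^2)/2)" for x :: real
  proof -
    have "0 \<le> (x^2 - 3)^2" by simp
    hence "-(x^4)/12 \<le> 3/4 + -(x^2)/2" by (simp add: power2_eq_square power4_eq_xxxx algebra_simps)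
    thus ?thesis by (simp flip: exp_add)
  qed
  thus "AE x in lborel. norm (exp (-((x::real)^4)/12)) \<le> norm (exp (3/4) * exp (-(x^2)/2))"
    by simp
qed measurable

lemma has_bochner_integral_I_inf: "has_bochner_integral lborel (\<lambda>x::real. exp (-(x^4)/12)) I_inf"
  using integrable_exp_neg_quartic
  by (simp add: has_bochner_integral_iff I_inf_def integral_lborel)

lemma has_integral_exp_neg_quartic_24:
  "((\<lambda>x::real. exp (-(x^4)/24)) has_integral 2 powr (1/4) * I_inf) UNIV"
proof -
  define r :: real where "r = 2 powr (1/4)"
  have r0: "r > 0" by (simp add: r_def)
  have "r^4 = r powr (real 4)" using r0 by (simp add: powr_realpow)
  hence r4: "r^4 = 2" by (simp add: r_def powr_powr)
  have "has_bochner_integral lborel (\<lambda>x. exp (-((0 + 1/r * x)^4)/12)) (I_inf /\<^sub>R \<bar>1/r\<bar>)"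
    using has_bochner_integral_I_inf r0
    by (subst (asm) lborel_has_bochner_integral_real_affine_iff[where c = "1/r" and t = 0]) auto
  moreover have "(\<lambda>x. exp (-((0 + 1/r * x)^4)/12)) = (\<lambda>x. exp (-(x^4)/24))"
    by (simp add: fun_eq_iff power_divide r4)
  moreover have "I_inf /\<^sub>R \<bar>1/r\<bar> = r * I_inf" using r0 by simp
  ultimately have "has_bochner_integral lborel (\<lambda>x. exp (-(x^4)/24)) (r * I_inf)"
    using r0 by simp
  thus ?thesis unfolding r_def by (rule has_bochner_integral_lborel_imp_has_integral)
qed

lemma I_inf_pos: "I_inf > 0"
proof -
  have "((\<lambda>x::real. exp (-1/12)) has_integral exp (-1/12::real)) {0..1}"
    using has_integral_const_real[of "exp (-1/12::real)" 0 1] by simp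
  hence "((\<lambda>x::real. if x \<in> {0..1} then exp (-1/12) else 0) has_integral exp (-1/12::real)) UNIV"
    by (subst has_integral_restrict_UNIV)
  moreover have "((\<lambda>x::real. exp (-(x^4)/12)) has_integral I_inf) UNIV"
    using has_bochner_integral_I_inf by (rule has_bochner_integral_lborel_imp_has_integral)
  moreover have "(if x \<in> {0..1} then exp (-1/12) else 0) \<le> exp (-(x^4)/12)" for x :: real
    using power_le_one[of x 4] by auto
  ultimately have "exp (-1/12) \<le> I_inf" by (rule has_integral_le)
  thus ?thesis using exp_gt_zero[of "-1/12::real"] by linarith
qed

section \<open>Pointwise behaviour of \<open>psi n\<close>\<close>

lemma powr_neg_quarter_pow4: "x > 0 \<Longrightarrow> (x powr (-1/4))^4 * x = (1::real)"
  by (simp add: powr_realpow[symmetric] powr_powr powr_add[symmetric])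

lemma mult_powr_neg_quarter_square:
  assumes "x > 0" shows "x * (x powr (-1/4))^2 = sqrt (x::real)"
proof -
  have "(x powr (-1/4))^2 = x powr (-1/2)"
    using assms by (simp add: powr_realpow[symmetric] powr_powr)
  hence "x * (x powr (-1/4))^2 = x powr 1 * x powr (-1/2)" using assms by simp
  also have "\<dots> = x powr (1/2)" by (subst powr_add[symmetric]) simp
  also have "\<dots> = sqrt x" using assms by (simp add: powr_half_sqrt)
  finally show ?thesis .
qed

lemma psi_nonneg: "psi n x \<ge> 0"
  by (simp add: psi_def)

lemma psi_le_exp_neg_quartic:
  assumes "n \<ge> 1"
  shows "psi n x \<le> exp (-(x^4/36) / (1 + x^2 * (real n powr (-1/4))^2 / 6)^2)"
proof -
  define t where "t = real n powr (-1/4)"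
  define s where "s = (x*t)^2/6"
  have n0: "real n > 0" using assms by simp
  have t2: "real n * t^2 = sqrt (real n)" and t4: "t^4 * real n = 1"
    using mult_powr_neg_quarter_square[OF n0] powr_neg_quarter_pow4[OF n0] by (simp_all add: t_def)
  have s0: "s \<ge> 0" by (simp add: s_def)
  have "psi n x = exp (- (sqrt (real n)) * x^2 / 2) * (cosh (x*t))^n" by (simp add: psi_def t_def)
  also have "exp (- (sqrt (real n)) * x^2 / 2) = exp (- 3 * s)^n"
  proof -
    have "- (sqrt (real n)) * x^2 / 2 = real n * (- 3 * s)"
      using t2 by (simp add: s_def power_mult_distrib algebra_simps flip: t2)
    thus ?thesis by (simp add: exp_of_nat_mult[symmetric])
  qed
  also have "exp (- 3 * s)^n * (cosh (x*t))^n \<le> exp (- 3 * s)^n * (3 * exp s - 2)^n"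
    unfolding s_def by (intro mult_left_mono power_mono cosh_le_three_exp_minus_two) auto
  also have "\<dots> = ((3 * exp s - 2) * exp (- 3 * s))^n" by (simp add: power_mult_distrib mult.commute)
  also have "\<dots> \<le> exp (- ((s/(1+s))^2))^n"
  proof (intro power_mono three_exp_minus_two_mult_exp_le s0)
    have "1 \<le> exp s" using s0 by simp
    hence "0 \<le> 3 * exp s - 2" by linarith
    thus "0 \<le> (3 * exp s - 2) * exp (- 3 * s)" by simp
  qed
  also have "\<dots> = exp (real n * (- ((s/(1+s))^2)))" by (simp add: exp_of_nat_mult[symmetric])
  also have "real n * (- ((s/(1+s))^2)) = -(x^4/36) / (1 + x^2 * t^2 / 6)^2"
  proof -
    have "real n * s^2 = x^4/36"
      using t4 by (simp add: s_def power_mult_distrib power2_eq_square[of "_/6"] algebra_simps flip: power_add)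
    have "real n * (- ((s/(1+s))^2)) = -(real n * s^2) / (1+s)^2" by (simp add: power_divide)
    also have "\<dots> = -(x^4/36) / (1+s)^2" by (simp only: \<open>real n * s^2 = x^4/36\<close>)
    finally show ?thesis by (simp add: s_def power_mult_distrib)
  qed
  finally show ?thesis by (simp add: t_def)
qed

lemma psi_le_exp_linear:
  assumes "n \<ge> 1"
  shows "psi n x \<le> exp (- sqrt (real n) * x^2/2 + real n * real n powr (-1/4) * \<bar>x\<bar>)"
proof -
  define t where "t = real n powr (-1/4)"
  have "psi n x = exp (- (sqrt (real n)) * x^2 / 2) * (cosh (x*t))^n" by (simp add: psi_def t_def)
  also have "\<dots> \<le> exp (- (sqrt (real n)) * x^2 / 2) * exp \<bar>x*t\<bar> ^ n"
    by (intro mult_left_mono power_mono cosh_le_exp_abs) auto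
  also have "\<dots> = exp (- sqrt (real n) * x^2/2 + real n * t * \<bar>x\<bar>)"
    by (simp add: t_def abs_mult algebra_simps flip: exp_add exp_of_nat_mult)
  finally show ?thesis by (simp add: t_def)
qed

lemma psi_le_exp_neg_quartic_504:
  assumes n: "n \<ge> 1" and x: "\<bar>x\<bar> * real n powr (-1/4) \<le> 4"
  shows "psi n x \<le> exp (-(x^4/504))"
proof -
  define D where "D = (1 + x^2 * (real n powr (-1/4))^2 / 6)^2"
  have "x^2 * (real n powr (-1/4))^2 \<le> 4^2"
    using power_mono[OF x, of 2] by (simp add: power_mult_distrib)
  hence "D \<le> (11/3)^2" unfolding D_def by (intro power_mono) auto
  hence "D \<le> 14" by (simp add: power2_eq_square)
  moreover have "D \<ge> 1" unfolding D_def by (rule one_le_power) simp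
  ultimately have "x^4/504 \<le> (x^4/36)/D" using divide_left_mono[of D 14 "x^4/36"] by simp
  hence "exp (-(x^4/36) / D) \<le> exp (-(x^4/504))" by simp
  thus ?thesis using psi_le_exp_neg_quartic[OF n, of x] unfolding D_def by linarith
qed

lemma psi_le_exp_neg_square_quarter:
  assumes n: "n \<ge> 1" and x: "\<bar>x\<bar> * real n powr (-1/4) \<ge> 4"
  shows "psi n x \<le> exp (- sqrt (real n) * x^2/4)"
proof -
  define t where "t = real n powr (-1/4)"
  have n0: "real n > 0" using n by simp
  have "real n * t * \<bar>x\<bar> * 4 \<le> real n * t * \<bar>x\<bar> * (\<bar>x\<bar> * t)"
    using x by (intro mult_left_mono) (auto simp: t_def)
  also have "\<dots> = (real n * t^2) * x^2" by (simp add: power2_eq_square algebra_simps)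
  also have "\<dots> = sqrt (real n) * x^2" using mult_powr_neg_quarter_square[OF n0] by (simp add: t_def)
  finally have "- sqrt (real n) * x^2/2 + real n * t * \<bar>x\<bar> \<le> - sqrt (real n) * x^2/4" by simp
  hence "exp (- sqrt (real n) * x^2/2 + real n * t * \<bar>x\<bar>) \<le> exp (- sqrt (real n) * x^2/4)" by simp
  thus ?thesis using psi_le_exp_linear[OF n, of x] unfolding t_def by linarith
qed

text \<open>Where \<open>|x| n^(-1/4) \<le> 4\<close> the quartic decay beats the weight; beyond that the Gaussian
  factor of \<open>psi n\<close> does, once \<open>\<surd>n \<ge> 2b\<^sup>2 + 2\<close>.\<close>
lemma weighted_psi_le_gaussian:
  obtains C where "\<And>n x. n \<ge> 1 \<Longrightarrow> sqrt (real n) \<ge> 2*b^2 + 2 \<Longrightarrow>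
                      exp (b^2*x^2/2) * psi n x \<le> C * exp (-(x^2)/2)"
proof
  define c where "c = (b^2+1)/2"
  fix n :: nat and x :: real
  assume n: "n \<ge> 1" and nb: "sqrt (real n) \<ge> 2*b^2 + 2"
  show "exp (b^2*x^2/2) * psi n x \<le> (exp (126 * c^2) + 1) * exp (-(x^2)/2)"
  proof (cases "\<bar>x\<bar> * real n powr (-1/4) \<le> 4")
    case True
    have "exp (b^2*x^2/2) * psi n x \<le> exp (b^2*x^2/2) * exp (-(x^4/504))"
      using psi_le_exp_neg_quartic_504[OF n True] by simp
    also have "\<dots> \<le> exp (126 * c^2) * exp (-(x^2)/2)"
    proof -
      have "c * x^2 - x^4/504 \<le> 126 * c^2"
        using zero_le_power2[of "x^2 - 252*c"] by (simp add: power2_eq_square algebra_simps power4_eq_xxxx)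
      thus ?thesis by (simp add: c_def algebra_simps flip: exp_add)
    qed
    also have "\<dots> \<le> (exp (126 * c^2) + 1) * exp (-(x^2)/2)" by (simp add: distrib_right)
    finally show ?thesis .
  next
    case False
    have "exp (b^2*x^2/2) * psi n x \<le> exp (b^2*x^2/2) * exp (- sqrt (real n) * x^2/4)"
      using psi_le_exp_neg_square_quarter[OF n] False by simp
    also have "\<dots> \<le> exp (-(x^2)/2)"
    proof -
      have "(2*b^2+2) * x^2 \<le> sqrt (real n) * x^2" using nb by (intro mult_right_mono) auto
      thus ?thesis by (simp add: algebra_simps flip: exp_add)
    qed
    also have "\<dots> \<le> (exp (126 * c^2) + 1) * exp (-(x^2)/2)" by (simp add: distrib_right)
    finally show ?thesis .
  qed
qed

lemma integrable_weighted_psi: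
  assumes "n \<ge> 1" and "sqrt (real n) \<ge> 2*b^2 + 2"
  shows "(\<lambda>x. exp (b^2*x^2/2) * psi n x) integrable_on UNIV"
proof -
  obtain C where C: "\<And>x. exp (b^2*x^2/2) * psi n x \<le> C * exp (-(x^2)/2)"
    using weighted_psi_le_gaussian[of b] assms by metis
  show ?thesis
  proof (rule integrable_on_all_intervals_integrable_bound)
    have "continuous_on UNIV (\<lambda>x. exp (b^2*x^2/2) * psi n x)"
      unfolding psi_def by (intro continuous_intros) auto
    thus "(\<lambda>x. if x \<in> UNIV then exp (b^2*x^2/2) * psi n x else 0) integrable_on cbox l u" for l u
      by (auto intro: integrable_continuous_real continuous_on_subset)
    show "norm (exp (b^2*x^2/2) * psi n x) \<le> C * exp (-(x^2)/2)" for x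
      using C[of x] psi_nonneg[of n x] by simp
    show "(\<lambda>x. C * exp (-(x^2)/2)) integrable_on UNIV"
      by (intro integrable_on_mult_right integrable_on_lborel integrable_exp_neg_square_half)
  qed
qed

lemma ln_cosh_quartic_tendsto: "((\<lambda>w::real. (ln (cosh w) - w^2/2)/w^4) \<longlongrightarrow> -1/12) (at_right 0)"
  by real_asymp

lemma mult_powr_neg_quarter_tendsto_0: "c > 0 \<Longrightarrow> filterlim (\<lambda>n. (c::real) * real n powr (-1/4)) (at_right 0) at_top"
  by real_asymp

lemma psi_tendsto: "(\<lambda>n. psi n x) \<longlonglongrightarrow> exp (-(x^4)/12)"
proof (cases "x = 0")
  case True
  thus ?thesis by (simp add: psi_def)
next
  case False
  define h where "h = (\<lambda>w::real. (ln (cosh w) - w^2/2)/w^4)"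
  have "(h \<longlongrightarrow> -1/12) (at_right 0)" unfolding h_def by (rule ln_cosh_quartic_tendsto)
  moreover have "filterlim (\<lambda>n. \<bar>x\<bar> * real n powr (-1/4)) (at_right 0) at_top"
    using False by (intro mult_powr_neg_quarter_tendsto_0) simp
  ultimately have "((\<lambda>n. h (\<bar>x\<bar> * real n powr (-1/4))) \<longlongrightarrow> -1/12) at_top"
    by (rule filterlim_compose)
  hence "((\<lambda>n. exp (x^4 * h (\<bar>x\<bar> * real n powr (-1/4)))) \<longlongrightarrow> exp (x^4 * (-1/12))) at_top"
    by (intro tendsto_intros)
  moreover have "eventually (\<lambda>n. exp (x^4 * h (\<bar>x\<bar> * real n powr (-1/4))) = psi n x) at_top"
    using eventually_ge_at_top[of "1::nat"]
  proof eventually_elim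
    case (elim n)
    define t where "t = real n powr (-1/4)"
    have n0: "real n > 0" and t0: "t > 0" using elim by (simp_all add: t_def)
    have t2: "real n * t^2 = sqrt (real n)" and t4: "1 / t^4 = real n"
      using mult_powr_neg_quarter_square[OF n0] powr_neg_quarter_pow4[OF n0] t0
      by (simp_all add: t_def field_simps)
    text \<open>\<open>h\<close> is chosen so that \<open>x^4 h (|x| t) = n ln (cosh (x t)) - \<surd>n x\<^sup>2/2 = ln (psi n x)\<close>.\<close>
    have "x^4 * h (\<bar>x\<bar> * t) = (ln (cosh (x*t)) - (x*t)^2/2) / t^4"
      using t0 False by (simp add: h_def abs_mult power_mult_distrib power_even_abs_numeral)
    also have "\<dots> = (1/t^4) * ln (cosh (x*t)) - (1/t^4) * t^2 * x^2/2"
      using t0 by (simp add: power_mult_distrib field_simps)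
    also have "\<dots> = real n * ln (cosh (x*t)) - sqrt (real n) * x^2 / 2"
      by (simp only: t4 t2 mult.assoc[symmetric])
    finally have "exp (x^4 * h (\<bar>x\<bar> * t)) = exp (- sqrt (real n) * x^2 / 2) * exp (real n * ln (cosh (x*t)))"
      by (simp flip: exp_add)
    also have "exp (real n * ln (cosh (x*t))) = cosh (x*t) ^ n"
      by (subst exp_of_nat_mult) simp
    finally show ?case by (simp add: psi_def t_def mult.commute)
  qed
  ultimately have "(\<lambda>n. psi n x) \<longlonglongrightarrow> exp (x^4 * (-1/12))"
    by (rule Lim_transform_eventually)
  thus ?thesis by simp
qed

section \<open>Shifting the line of integration\<close>

definition psi_ext :: "nat \<Rightarrow> complex \<Rightarrow> complex" where
  "psi_ext n z = exp (-(of_real (sqrt (real n)) * z^2 / 2)) * cosh (of_real (real n powr (-1/4)) * z) ^ n"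

lemma psi_ext_of_real: "psi_ext n (of_real x) = of_real (psi n x)"
proof -
  have "cosh (complex_of_real y) = of_real (cosh y)" for y
    by (simp add: cosh_def exp_of_real[symmetric] scaleR_conv_of_real)
  hence "cosh (of_real (real n powr (-1/4)) * complex_of_real x) = of_real (cosh (x * real n powr (-1/4)))"
    by (metis mult.commute of_real_mult)
  moreover have "exp (-(of_real (sqrt (real n)) * (complex_of_real x)^2 / 2))
                   = of_real (exp (- (sqrt (real n)) * x^2 / 2))"
    by (simp flip: exp_of_real)
  ultimately show ?thesis by (simp add: psi_ext_def psi_def)
qed

lemma cosh_power_eq_sum:
  fixes z :: complex
  shows "cosh z ^ n = (\<Sum>k\<le>n. of_real (real (n choose k) / 2^n) * exp (of_real (2 * real k - real n) * z))"
proof -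
  have "exp z ^ k * exp (-z) ^ (n-k) = exp (of_real (2 * real k - real n) * z)" if "k \<le> n" for k
    using that by (simp add: exp_of_nat_mult[symmetric] mult_exp_exp of_nat_diff algebra_simps)
  hence "(exp z + exp (-z))^n = (\<Sum>k\<le>n. of_nat (n choose k) * exp (of_real (2 * real k - real n) * z))"
    unfolding binomial_ring by (intro sum.cong refl) (simp add: mult.assoc)
  thus ?thesis
    by (simp add: cosh_field_def power_divide sum_divide_distrib)
qed

lemma psi_ext_mult_exp_eq_sum:
  "psi_ext n z * exp (\<i> * of_real \<xi> * z) =
     (\<Sum>k\<le>n. of_real (real (n choose k) / 2^n) *
        exp (-(of_real (sqrt (real n)) * z^2 / 2) +
             (of_real (real n powr (-1/4) * (2 * real k - real n)) + \<i> * of_real \<xi>) * z))"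
  unfolding psi_ext_def cosh_power_eq_sum sum_distrib_left sum_distrib_right
  by (intro sum.cong refl) (simp add: mult_exp_exp algebra_simps)

text \<open>Each term of the expansion is a Gaussian whose integral along \<open>Im z = \<beta>\<close> does not
  depend on \<open>\<beta>\<close>; this replaces Cauchy's theorem.\<close>
lemma has_integral_psi_ext_line:
  assumes "n \<ge> 1"
  shows "((\<lambda>x. psi_ext n (of_real x + \<i> * of_real \<beta>) * exp (\<i> * of_real \<xi> * (of_real x + \<i> * of_real \<beta>)))
           has_integral psi_hat n \<xi>) UNIV"
proof -
  define a where "a = sqrt (real n)"
  define S where "S = (\<Sum>k\<le>n. of_real (real (n choose k) / 2^n) *
                         (of_real (sqrt (2*pi/a)) *
                          exp ((of_real (real n powr (-1/4) * (2 * real k - real n)) + \<i> * of_real \<xi>)^2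
                               / (2 * of_real a))))"
  have a: "a > 0" using assms by (simp add: a_def)
  have line: "((\<lambda>x. psi_ext n (of_real x + \<i> * of_real \<gamma>) * exp (\<i> * of_real \<xi> * (of_real x + \<i> * of_real \<gamma>)))
                has_integral S) UNIV" for \<gamma>
    unfolding psi_ext_mult_exp_eq_sum S_def a_def[symmetric]
    by (intro has_integral_sum finite_atMost has_integral_mult_right has_integral_gaussian_exp_linear_line a)
  from line[of 0] have "((\<lambda>x. complex_of_real (psi n x) * cis (\<xi> * x)) has_integral S) UNIV"
    by (simp add: psi_ext_of_real cis_conv_exp mult_ac)
  hence "psi_hat n \<xi> = S" unfolding psi_hat_def by (rule integral_unique)
  thus ?thesis using line by simp
qed

lemma norm_cosh_line_le:
  fixes t x \<beta> :: real assumes "\<bar>t * \<beta>\<bar> \<le> 1"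
  shows "norm (cosh (of_real t * (of_real x + \<i> * of_real \<beta>)))
           \<le> cosh (t*x) * exp ((-((t*\<beta>)^2) + 7/20 * (t*\<beta>)^4 + (t*\<beta>)^2 * (t*x)^2) / 2)"
proof (rule power2_le_imp_le)
  define E where "E = -((t*\<beta>)^2) + 7/20 * (t*\<beta>)^4 + (t*\<beta>)^2 * (t*x)^2"
  have "(norm (cosh (of_real t * (of_real x + \<i> * of_real \<beta>))))^2 = cosh (t*x)^2 - sin (t*\<beta>)^2"
    by (simp add: norm_cosh_squared)
  also have "\<dots> \<le> cosh (t*x)^2 * exp E"
    unfolding E_def using assms by (rule cosh_square_minus_sin_square_le)
  also have "\<dots> = (cosh (t*x) * exp (E/2))^2"
    by (simp add: power_mult_distrib flip: exp_of_nat_mult)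
  finally show "(norm (cosh (of_real t * (of_real x + \<i> * of_real \<beta>))))^2 \<le> (cosh (t*x) * exp (E/2))^2" .
qed simp

lemma norm_psi_ext_le:
  assumes n: "n \<ge> 1" and \<beta>: "\<bar>\<beta>\<bar> * real n powr (-1/4) \<le> 1"
  shows "norm (psi_ext n (of_real x + \<i> * of_real \<beta>)) \<le> exp (7*\<beta>^4/40) * (exp (\<beta>^2*x^2/2) * psi n x)"
proof -
  define t where "t = real n powr (-1/4)"
  define a where "a = sqrt (real n)"
  define E where "E = -((t*\<beta>)^2) + 7/20 * (t*\<beta>)^4 + (t*\<beta>)^2 * (t*x)^2"
  have n0: "real n > 0" using n by simp
  have "norm (cosh (of_real t * (of_real x + \<i> * of_real \<beta>))) \<le> cosh (t*x) * exp (E/2)"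
    unfolding E_def using \<beta> by (intro norm_cosh_line_le) (simp add: t_def abs_mult mult.commute)
  hence "norm (cosh (of_real t * (of_real x + \<i> * of_real \<beta>)) ^ n) \<le> (cosh (t*x) * exp (E/2)) ^ n"
    unfolding norm_power by (intro power_mono) auto
  also have "\<dots> = cosh (t*x) ^ n * exp (real n * E/2)"
    by (simp add: power_mult_distrib flip: exp_of_nat_mult)
  also have "real n * E = -(a * \<beta>^2) + 7/20 * \<beta>^4 + \<beta>^2 * x^2"
  proof -
    have "real n * E = -((real n * t^2) * \<beta>^2) + 7/20 * ((t^4 * real n) * \<beta>^4) + (t^4 * real n) * \<beta>^2 * x^2"
      unfolding E_def by (simp add: power_mult_distrib algebra_simps power2_eq_square power4_eq_xxxx)
    thus ?thesis
      using powr_neg_quarter_pow4[OF n0] mult_powr_neg_quarter_square[OF n0] by (simp add: t_def a_def)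
  qed
  finally have cosh_pow: "norm (cosh (of_real t * (of_real x + \<i> * of_real \<beta>)) ^ n)
                            \<le> cosh (t*x) ^ n * exp ((-(a * \<beta>^2) + 7/20 * \<beta>^4 + \<beta>^2 * x^2)/2)" .
  have norm_gauss: "norm (exp (-(of_real a * (of_real x + \<i> * of_real \<beta>)^2 / 2))) = exp (-(a * (x^2 - \<beta>^2))/2)"
    by (simp add: norm_exp_eq_Re power2_eq_square field_simps)
  have "norm (psi_ext n (of_real x + \<i> * of_real \<beta>))
      \<le> exp (-(a * (x^2 - \<beta>^2))/2) * (cosh (t*x) ^ n * exp ((-(a * \<beta>^2) + 7/20 * \<beta>^4 + \<beta>^2 * x^2)/2))"
    unfolding psi_ext_def a_def[symmetric] t_def[symmetric] norm_mult norm_gauss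
    by (intro mult_left_mono cosh_pow) simp
  also have "\<dots> = exp (-(a * (x^2 - \<beta>^2))/2 + (-(a * \<beta>^2) + 7/20 * \<beta>^4 + \<beta>^2 * x^2)/2) * cosh (t*x) ^ n"
    by (simp only: mult_exp_exp[symmetric] mult_ac)
  also have "-(a * (x^2 - \<beta>^2))/2 + (-(a * \<beta>^2) + 7/20 * \<beta>^4 + \<beta>^2 * x^2)/2
               = 7*\<beta>^4/40 + (\<beta>^2*x^2/2 + - a * x^2 / 2)"
    by (simp add: field_simps)
  also have "exp (7*\<beta>^4/40 + (\<beta>^2*x^2/2 + - a * x^2 / 2)) * cosh (t*x) ^ n
               = exp (7*\<beta>^4/40) * (exp (\<beta>^2*x^2/2) * psi n x)"
    unfolding psi_def a_def t_def exp_add by (simp add: mult_ac)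
  finally show ?thesis .
qed

lemma norm_psi_hat_le:
  assumes n: "n \<ge> 1" and b: "b \<ge> 0" "b * real n powr (-1/4) \<le> 1"
    and int: "(\<lambda>x. exp (b^2*x^2/2) * psi n x) integrable_on UNIV"
  shows "cmod (psi_hat n \<xi>) \<le> exp (- b * \<bar>\<xi>\<bar>) * (exp (7*b^4/40) * integral UNIV (\<lambda>x. exp (b^2*x^2/2) * psi n x))"
proof -
  define \<beta> where "\<beta> = (if \<xi> \<ge> 0 then b else -b)"
  have \<beta>: "\<bar>\<beta>\<bar> = b" "\<beta>^2 = b^2" "\<beta>^4 = b^4" "\<xi> * \<beta> = b * \<bar>\<xi>\<bar>"
    using b by (auto simp: \<beta>_def)
  define F where "F = (\<lambda>x. psi_ext n (of_real x + \<i> * of_real \<beta>) * exp (\<i> * of_real \<xi> * (of_real x + \<i> * of_real \<beta>)))"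
  define g where "g = (\<lambda>x. exp (- b * \<bar>\<xi>\<bar>) * (exp (7*b^4/40) * (exp (b^2*x^2/2) * psi n x)))"
  have F: "(F has_integral psi_hat n \<xi>) UNIV"
    unfolding F_def by (rule has_integral_psi_ext_line[OF n])
  have "norm (F x) \<le> g x" for x
  proof -
    have "norm (exp (\<i> * of_real \<xi> * (of_real x + \<i> * of_real \<beta>))) = exp (- b * \<bar>\<xi>\<bar>)"
      using \<beta>(4) by (simp add: norm_exp_eq_Re algebra_simps)
    thus ?thesis
      using norm_psi_ext_le[OF n, of \<beta> x] \<beta> b unfolding F_def g_def norm_mult by (simp add: mult.commute)
  qed
  moreover have "g integrable_on UNIV" unfolding g_def by (intro integrable_on_mult_right int)
  ultimately have "norm (integral UNIV F) \<le> integral UNIV g"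
    using F by (intro integral_norm_bound_integral) auto
  hence "cmod (psi_hat n \<xi>) \<le> integral UNIV g" using F by (simp add: integral_unique)
  also have "integral UNIV g
      = exp (- b * \<bar>\<xi>\<bar>) * (exp (7*b^4/40) * integral UNIV (\<lambda>x. exp (b^2*x^2/2) * psi n x))"
    unfolding g_def by (simp add: integral_mult_right)
  finally show ?thesis .
qed

section \<open>The limit and the constant \<open>K(b)\<close>\<close>

lemma weighted_exp_neg_quartic_le:
  fixes b x :: real assumes "b \<ge> 0"
  shows "exp (b^2*x^2/2) * exp (-(x^4)/12)
           \<le> (if x \<in> {-2 * sqrt 3 * b..2 * sqrt 3 * b} then exp (3*b^4/4) else 0) + exp (-(x^4)/24)"
proof (cases "x \<in> {-2 * sqrt 3 * b..2 * sqrt 3 * b}")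
  case True
  have "0 \<le> (x^2 - 3*b^2)^2" by simp
  hence "b^2*x^2/2 + -(x^4)/12 \<le> 3*b^4/4"
    by (simp add: power2_eq_square power4_eq_xxxx algebra_simps)
  hence "exp (b^2*x^2/2 + -(x^4)/12) \<le> exp (3*b^4/4)" by (simp only: exp_le_cancel_iff)
  hence "exp (b^2*x^2/2) * exp (-(x^4)/12) \<le> exp (3*b^4/4)" by (simp only: exp_add)
  thus ?thesis unfolding if_P[OF True] using exp_gt_zero[of "-(x^4)/24"] by linarith
next
  case False
  hence "(2 * sqrt 3 * b)^2 \<le> \<bar>x\<bar>^2" using assms by (intro power_mono) auto
  hence "12 * b^2 \<le> x^2" by (simp add: power_mult_distrib)
  hence "b^2 * x^2 / 2 \<le> (x^2/12) * x^2 / 2" by (intro divide_right_mono mult_right_mono) auto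
  hence "b^2*x^2/2 + -(x^4)/12 \<le> -(x^4)/24" by (simp add: power2_eq_square power4_eq_xxxx)
  hence "exp (b^2*x^2/2 + -(x^4)/12) \<le> exp (-(x^4)/24)" by (simp only: exp_le_cancel_iff)
  thus ?thesis unfolding if_not_P[OF False] exp_add by simp
qed

lemma integral_weighted_exp_neg_quartic_le:
  fixes b :: real assumes b: "b \<ge> 0"
  shows "(\<lambda>x. exp (b^2*x^2/2) * exp (-(x^4)/12)) integrable_on UNIV"
    and "exp (7*b^4/40) * integral UNIV (\<lambda>x. exp (b^2*x^2/2) * exp (-(x^4)/12)) \<le> K b"
proof -
  define R where "R = 2 * sqrt 3 * b"
  define H where "H = (\<lambda>x::real. (if x \<in> {-R..R} then exp (3*b^4/4) else 0) + exp (-(x^4)/24))"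
  have "((\<lambda>x::real. exp (3*b^4/4)) has_integral (2*R) * exp (3*b^4/4)) {-R..R}"
    using has_integral_const_real[of "exp (3*b^4/4)" "-R" R] b by (simp add: R_def algebra_simps)
  hence "((\<lambda>x::real. if x \<in> {-R..R} then exp (3*b^4/4) else 0) has_integral (2*R) * exp (3*b^4/4)) UNIV"
    by (subst has_integral_restrict_UNIV)
  hence H: "(H has_integral (2*R) * exp (3*b^4/4) + 2 powr (1/4) * I_inf) UNIV"
    unfolding H_def by (intro has_integral_add has_integral_exp_neg_quartic_24)
  have le: "exp (b^2*x^2/2) * exp (-(x^4)/12) \<le> H x" for x
    using weighted_exp_neg_quartic_le[OF b, of x] by (simp add: H_def R_def)
  show int: "(\<lambda>x. exp (b^2*x^2/2) * exp (-(x^4)/12)) integrable_on UNIV"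
  proof (rule integrable_on_all_intervals_integrable_bound)
    show "(\<lambda>x. if x \<in> UNIV then exp (b^2*x^2/2) * exp (-(x^4)/12) else 0) integrable_on cbox l u" for l u
      by (auto intro!: integrable_continuous_real continuous_intros)
    show "norm (exp (b^2*x^2/2) * exp (-(x^4)/12)) \<le> H x" for x using le[of x] by simp
    show "H integrable_on UNIV" using H by blast
  qed
  have "exp (7*b^4/40) * integral UNIV (\<lambda>x. exp (b^2*x^2/2) * exp (-(x^4)/12))
          \<le> exp (7*b^4/40) * ((2*R) * exp (3*b^4/4) + 2 powr (1/4) * I_inf)"
    using has_integral_le[OF integrable_integral[OF int] H le] by simp
  also have "\<dots> = (2*R) * (exp (7*b^4/40) * exp (3*b^4/4)) + exp (7*b^4/40) * (2 powr (1/4) * I_inf)"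
    by (simp add: algebra_simps)
  also have "\<dots> \<le> (2*R) * exp (13*b^4/12) + exp (13*b^4/12) * (2 * I_inf)"
  proof -
    have "exp (7*b^4/40) * exp (3*b^4/4) \<le> exp (13*b^4/12)" using b by (simp flip: exp_add)
    hence "(2*R) * (exp (7*b^4/40) * exp (3*b^4/4)) \<le> (2*R) * exp (13*b^4/12)"
      using b by (intro mult_left_mono) (auto simp: R_def)
    moreover have "2 powr (1/4) \<le> (2::real) powr 1" by (intro powr_mono) auto
    hence "exp (7*b^4/40) * (2 powr (1/4) * I_inf) \<le> exp (13*b^4/12) * (2 * I_inf)"
      using b I_inf_pos by (intro mult_mono) auto
    ultimately show ?thesis by (rule add_mono)
  qed
  also have "\<dots> = K b" by (simp add: K_def R_def algebra_simps)
  finally show "exp (7*b^4/40) * integral UNIV (\<lambda>x. exp (b^2*x^2/2) * exp (-(x^4)/12)) \<le> K b" .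
qed

lemma sqrt_nat_at_top: "filterlim (\<lambda>n::nat. sqrt (real n)) at_top at_top"
  by real_asymp

lemma powr_neg_quarter_tendsto_0: "((\<lambda>n::nat. real n powr (-1/4)) \<longlongrightarrow> 0) at_top"
  by real_asymp

lemma eventually_large_index:
  "eventually (\<lambda>n::nat. n \<ge> 1 \<and> sqrt (real n) \<ge> c \<and> b * real n powr (-1/4) < 1) at_top"
proof (intro eventually_conj eventually_ge_at_top)
  show "eventually (\<lambda>n::nat. sqrt (real n) \<ge> c) at_top"
    using sqrt_nat_at_top by (simp add: filterlim_at_top)
  have "((\<lambda>n::nat. b * real n powr (-1/4)) \<longlongrightarrow> b * 0) at_top"
    by (intro tendsto_mult tendsto_const powr_neg_quarter_tendsto_0)
  thus "eventually (\<lambda>n::nat. b * real n powr (-1/4) < 1) at_top"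
    by (rule order_tendstoD(2)) simp
qed

lemma weighted_psi_integral_tendsto:
  "(\<lambda>n. integral UNIV (\<lambda>x. exp (b^2*x^2/2) * psi n x))
     \<longlonglongrightarrow> integral UNIV (\<lambda>x. exp (b^2*x^2/2) * exp (-(x^4)/12))"
proof -
  obtain C where C: "\<And>n x. n \<ge> 1 \<Longrightarrow> sqrt (real n) \<ge> 2*b^2 + 2 \<Longrightarrow>
                            exp (b^2*x^2/2) * psi n x \<le> C * exp (-(x^2)/2)"
    using weighted_psi_le_gaussian by metis
  obtain N where N: "\<And>n. n \<ge> N \<Longrightarrow> n \<ge> 1 \<and> sqrt (real n) \<ge> 2*b^2 + 2"
    using eventually_large_index[of "2*b^2 + 2" 0] unfolding eventually_sequentially by auto
  define F where "F = (\<lambda>k x. exp (b^2*x^2/2) * psi (k + N) x)"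
  have "(\<lambda>k. integral UNIV (F k)) \<longlonglongrightarrow> integral UNIV (\<lambda>x. exp (b^2*x^2/2) * exp (-(x^4)/12))"
  proof (rule dominated_convergence(2))
    show "F k integrable_on UNIV" for k
      unfolding F_def using N[of "k + N"] by (intro integrable_weighted_psi) auto
    show "(\<lambda>x. C * exp (-(x^2)/2)) integrable_on UNIV"
      by (intro integrable_on_mult_right integrable_on_lborel integrable_exp_neg_square_half)
    show "norm (F k x) \<le> C * exp (-(x^2)/2)" for k x
      unfolding F_def using N[of "k + N"] C[of "k + N" x] psi_nonneg[of "k + N" x] by auto
    show "(\<lambda>k. F k x) \<longlonglongrightarrow> exp (b^2*x^2/2) * exp (-(x^4)/12)" for x
      unfolding F_def by (intro tendsto_mult tendsto_const LIMSEQ_ignore_initial_segment psi_tendsto)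
  qed
  thus ?thesis unfolding F_def by (rule LIMSEQ_offset)
qed

lemma K_pos: "b \<ge> 0 \<Longrightarrow> K b > 0"
  using I_inf_pos by (simp add: K_def add_nonneg_pos)

theorem proposition4p3:
  fixes b \<eta> :: real
  assumes "b \<ge> 0" and "\<eta> > 0"
  shows "\<exists>n0::nat. \<forall>n\<ge>n0. \<forall>\<xi>::real.
           cmod (psi_hat n \<xi>) \<le> (1 + \<eta>) * K b * exp (- b * \<bar>\<xi>\<bar>)"
proof -
  define J where "J = (\<lambda>n. exp (7*b^4/40) * integral UNIV (\<lambda>x. exp (b^2*x^2/2) * psi n x))"
  have "J \<longlonglongrightarrow> exp (7*b^4/40) * integral UNIV (\<lambda>x. exp (b^2*x^2/2) * exp (-(x^4)/12))"
    unfolding J_def by (intro tendsto_mult tendsto_const weighted_psi_integral_tendsto)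
  moreover have "exp (7*b^4/40) * integral UNIV (\<lambda>x. exp (b^2*x^2/2) * exp (-(x^4)/12)) < (1 + \<eta>) * K b"
    using integral_weighted_exp_neg_quartic_le(2)[OF assms(1)] mult_pos_pos[OF assms(2) K_pos[OF assms(1)]]
    by (simp add: distrib_right)
  ultimately have "eventually (\<lambda>n. J n < (1 + \<eta>) * K b) at_top"
    by (rule order_tendstoD(2))
  hence "eventually (\<lambda>n. J n < (1 + \<eta>) * K b \<and> n \<ge> 1 \<and> sqrt (real n) \<ge> 2*b^2 + 2 \<and>
                              b * real n powr (-1/4) < 1) at_top"
    using eventually_large_index by (rule eventually_conj)
  then obtain n0 where n0: "\<And>n. n \<ge> n0 \<Longrightarrow> J n < (1 + \<eta>) * K b \<and> n \<ge> 1 \<and>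
                                   sqrt (real n) \<ge> 2*b^2 + 2 \<and> b * real n powr (-1/4) < 1"
    unfolding eventually_sequentially by blast
  show ?thesis
  proof (intro exI[of _ n0] allI impI)
    fix n :: nat and \<xi> :: real
    assume "n \<ge> n0"
    note n = n0[OF this]
    have "cmod (psi_hat n \<xi>) \<le> exp (- b * \<bar>\<xi>\<bar>) * J n"
      unfolding J_def using n assms(1) by (intro norm_psi_hat_le integrable_weighted_psi) auto
    also have "\<dots> \<le> exp (- b * \<bar>\<xi>\<bar>) * ((1 + \<eta>) * K b)"
      using n by (intro mult_left_mono) auto
    finally show "cmod (psi_hat n \<xi>) \<le> (1 + \<eta>) * K b * exp (- b * \<bar>\<xi>\<bar>)"
      by (simp add: mult.commute)
  qed
qed

end
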